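(* Let $k$ and $M$ be positive integers, and let $M=p_{1}^{e_{1}}p_{2}^{e_{2}}\cdots p_{l}^{e_{l}}$ be the prime factorization of $M$, where $p_1,\dots,p_l$ are distinct primes. For any integers $n,m\geq \max\{e_j \mid 1\leq j\leq l\}$ satisfying $n\equiv m \pmod{\varphi(M)}$, we have \[ B^{(-k)}_{n}\equiv B^{(-k)}_{m}\pmod{M}. \]
   Context: For any integer $k$, let $\mathrm{Li}_k(t)=\sum_{n=1}^{\infty} t^n/n^k$. The poly-Bernoulli numbers $B^{(k)}_n$ ($n\ge 0$) are defined by the generating series $\frac{\mathrm{Li}_k(1-e^{-t})}{1-e^{-t}}=\sum_{n=0}^{\infty}B^{(k)}_n\frac{t^n}{n!}$. For negative upper index these are integers. $\varphi$ denotes Euler's totient function. *)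

theory Defs
  imports Complex_Main "HOL-Computational_Algebra.Formal_Power_Series" "HOL-Number_Theory.Number_Theory"
begin

definition Li_fps :: "int \<Rightarrow> real fps" where
  "Li_fps k = Abs_fps (\<lambda>n. if n = 0 then 0 else 1 / ((of_nat n :: real) powi k))"

definition one_minus_exp_neg :: "real fps" where
  "one_minus_exp_neg = 1 - fps_exp (-1)"

definition poly_bernoulli_gf :: "int \<Rightarrow> real fps" where
  "poly_bernoulli_gf k = fps_compose (Li_fps k) one_minus_exp_neg / one_minus_exp_neg"

definition poly_bernoulli :: "int \<Rightarrow> nat \<Rightarrow> real" where
  "poly_bernoulli k n = fps_nth (poly_bernoulli_gf k) n * fact n"

end

theory Submission
  imports Defs
begin

text \<open>
  Write L_k = Li_{-k}(1 - e^{-t}). Since Li_{-k-1} = x d/dx Li_{-k} and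
  d/dt (1 - e^{-t}) = e^{-t}, the chain rule gives L_{k+1} = (e^t - 1) L_k', while
  L_0 = e^t - 1. The operator (e^t - 1) d/dt preserves integer combinations of the
  exponentials e^{at} with a natural, so every L_k is one. As e^t - 1 = e^t (1 - e^{-t}), the
  generating function L_k / (1 - e^{-t}) is e^t L_{k-1}' (or e^t for k = 0), again such a
  combination. Hence B_n^{(-k)} = sum_a c_a a^n with integers c_a, and it
  suffices that a^n = a^m (mod M) for every a. This is checked one prime power p^e || M at a
  time: if p divides a, both sides vanish because n, m >= e; otherwise Euler's theorem
  applies because phi(p^e) divides phi(M).
\<close>

lemma cong_pow_prime_power:
  fixes a p e n m :: nat
  assumes "prime p" and "e \<le> n" and "e \<le> m" and "[n = m] (mod totient (p ^ e))"
  shows "[a ^ n = a ^ m] (mod p ^ e)"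
proof (cases "p dvd a")
  case True
  have "p ^ e dvd a ^ k" if "e \<le> k" for k
    using that True by (meson dvd_power_same dvd_trans le_imp_power_dvd)
  then have "[a ^ n = 0] (mod p ^ e)" and "[a ^ m = 0] (mod p ^ e)"
    using assms(2,3) by (simp_all add: cong_0_iff)
  then show ?thesis
    by (meson cong_sym cong_trans)
next
  case False
  then have coprime: "coprime (p ^ e) a"
    using assms(1) by (simp add: prime_imp_coprime)
  then have "[n = m] (mod ord (p ^ e) a)"
    using assms(4) order_divides_totient cong_dvd_modulus_nat by blast
  then show ?thesis
    using order_divides_expdiff[OF coprime] by blast
qed

lemma cong_pow_totient:
  fixes a M n m :: nat
  assumes "\<forall>p\<in>prime_factors M. multiplicity p M \<le> n"
    and "\<forall>p\<in>prime_factors M. multiplicity p M \<le> m"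
    and "[n = m] (mod totient M)"
  shows "[a ^ n = a ^ m] (mod M)"
proof (cases "M = 0")
  case True
  then show ?thesis
    using assms(3) by simp
next
  case False
  have "[a ^ n = a ^ m] (mod (\<Prod>p\<in>prime_factors M. p ^ multiplicity p M))"
  proof (rule coprime_cong_prod_nat)
    fix p q
    assume "p \<in> prime_factors M" "q \<in> prime_factors M" "p \<noteq> q"
    then show "coprime (p ^ multiplicity p M) (q ^ multiplicity q M)"
      by (simp add: in_prime_factors_iff primes_coprime)
  next
    fix p
    assume p: "p \<in> prime_factors M"
    have "totient (p ^ multiplicity p M) dvd totient M"
      by (rule totient_dvd) (rule multiplicity_dvd)
    then have "[n = m] (mod totient (p ^ multiplicity p M))"
      using assms(3) cong_dvd_modulus_nat by blast
    then show "[a ^ n = a ^ m] (mod p ^ multiplicity p M)"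
      using p assms(1,2) by (intro cong_pow_prime_power) auto
  qed
  then show ?thesis
    using False by (simp add: prod_prime_factors)
qed

inductive int_span_exp :: "real fps \<Rightarrow> bool" where
  int_span_exp_zero: "int_span_exp 0"
| int_span_exp_add: "int_span_exp F \<Longrightarrow> int_span_exp G \<Longrightarrow> int_span_exp (F + G)"
| int_span_exp_neg: "int_span_exp F \<Longrightarrow> int_span_exp (- F)"
| int_span_exp_exp: "int_span_exp (fps_exp (of_nat a))"

lemma int_span_exp_diff: "int_span_exp F \<Longrightarrow> int_span_exp G \<Longrightarrow> int_span_exp (F - G)"
  by (metis diff_conv_add_uminus int_span_exp_add int_span_exp_neg)

lemma int_span_exp_of_nat_mult: "int_span_exp F \<Longrightarrow> int_span_exp (of_nat j * F)"
  by (induction j) (simp_all add: distrib_right int_span_exp_zero int_span_exp_add)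

lemma int_span_exp_deriv: "int_span_exp F \<Longrightarrow> int_span_exp (fps_deriv F)"
proof (induction rule: int_span_exp.induct)
  case (int_span_exp_exp a)
  have "fps_deriv (fps_exp (of_nat a :: real)) = of_nat a * fps_exp (of_nat a)"
    by (simp add: fps_of_nat)
  then show ?case
    using int_span_exp_of_nat_mult[OF int_span_exp.int_span_exp_exp] by simp
qed (simp_all add: int_span_exp.intros)

lemma int_span_exp_exp_mult:
  "int_span_exp F \<Longrightarrow> int_span_exp (fps_exp (of_nat b) * F)"
proof (induction rule: int_span_exp.induct)
  case (int_span_exp_exp a)
  have "fps_exp (of_nat b) * fps_exp (of_nat a :: real) = fps_exp (of_nat (b + a))"
    by (simp add: fps_exp_add_mult)
  then show ?case
    using int_span_exp.int_span_exp_exp[of "b + a"] by simp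
qed (simp_all add: distrib_left int_span_exp.intros)

lemma int_span_exp_fact_nth_cong:
  fixes M n m :: nat
  assumes "int_span_exp G" and "\<And>a :: nat. [a ^ n = a ^ m] (mod M)"
  shows "\<exists>c::int. fps_nth G n * fact n - fps_nth G m * fact m = of_int (int M * c)"
  using assms(1)
proof (induction rule: int_span_exp.induct)
  case int_span_exp_zero
  then show ?case by simp
next
  case (int_span_exp_add F G)
  then obtain c d where "fps_nth F n * fact n - fps_nth F m * fact m = of_int (int M * c)"
    and "fps_nth G n * fact n - fps_nth G m * fact m = of_int (int M * d)"
    by blast
  then show ?case
    by (intro exI[of _ "c + d"]) (simp add: algebra_simps)
next
  case (int_span_exp_neg F)
  then obtain c where "fps_nth F n * fact n - fps_nth F m * fact m = of_int (int M * c)"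
    by blast
  then show ?case
    by (intro exI[of _ "- c"]) (simp add: algebra_simps)
next
  case (int_span_exp_exp a)
  have "[int a ^ n = int a ^ m] (mod int M)"
    using assms(2)[of a] by (simp add: cong_int_iff flip: of_nat_power)
  then obtain c where "int a ^ n - int a ^ m = int M * c"
    by (auto simp: cong_iff_dvd_diff dvd_def)
  then have "real a ^ n - real a ^ m = of_int (int M * c)"
    by (metis of_int_diff of_int_of_nat_eq of_int_power)
  then show ?case
    by (simp add: fps_exp_def)
qed

lemma fps_nth_Li_fps_neg: "fps_nth (Li_fps (- int k)) n = (if n = 0 then 0 else real n ^ k)"
  by (simp add: Li_fps_def power_int_minus divide_inverse)

lemma Li_fps_neg_Suc: "Li_fps (- int (Suc k)) = fps_X * fps_deriv (Li_fps (- int k))"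
  by (rule fps_ext) (simp only: fps_nth_Li_fps_neg fps_X_mult_nth fps_deriv_nth, auto)

lemma one_minus_X_mult_Li_fps_0: "(1 - fps_X) * Li_fps 0 = fps_X"
  by (auto simp: fps_eq_iff Li_fps_def algebra_simps)

lemma fps_nth_one_minus_exp_neg_0: "fps_nth one_minus_exp_neg 0 = 0"
  by (simp add: one_minus_exp_neg_def)

lemma fps_deriv_one_minus_exp_neg: "fps_deriv one_minus_exp_neg = fps_exp (-1)"
  by (simp add: one_minus_exp_neg_def fps_const_neg [symmetric])

lemma fps_exp_1_mult_exp_neg_1: "fps_exp (1::real) * fps_exp (-1) = 1"
  by (simp flip: fps_exp_add_mult)

lemma one_minus_exp_neg_mult_exp_1: "one_minus_exp_neg * fps_exp 1 = fps_exp 1 - 1"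
  by (simp add: one_minus_exp_neg_def algebra_simps fps_exp_1_mult_exp_neg_1)

definition Li_neg_comp :: "nat \<Rightarrow> real fps" where
  "Li_neg_comp k = Li_fps (- int k) oo one_minus_exp_neg"

lemma Li_neg_comp_0: "Li_neg_comp 0 = one_minus_exp_neg * fps_exp 1"
proof -
  have "fps_exp (-1) * Li_neg_comp 0 = ((1 - fps_X) * Li_fps 0) oo one_minus_exp_neg"
    by (simp add: Li_neg_comp_def fps_compose_mult_distrib fps_nth_one_minus_exp_neg_0
        fps_compose_sub_distrib one_minus_exp_neg_def)
  also have "\<dots> = one_minus_exp_neg"
    by (simp add: one_minus_X_mult_Li_fps_0 fps_nth_one_minus_exp_neg_0)
  finally have "fps_exp 1 * (fps_exp (-1) * Li_neg_comp 0) = fps_exp 1 * one_minus_exp_neg"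
    by simp
  then show ?thesis
    by (simp add: mult.assoc [symmetric] fps_exp_1_mult_exp_neg_1 mult.commute)
qed

lemma Li_neg_comp_Suc:
  "Li_neg_comp (Suc k) = one_minus_exp_neg * (fps_exp 1 * fps_deriv (Li_neg_comp k))"
proof -
  let ?D = "fps_deriv (Li_fps (- int k)) oo one_minus_exp_neg"
  have "Li_neg_comp (Suc k) = one_minus_exp_neg * ?D"
    unfolding Li_neg_comp_def Li_fps_neg_Suc
    by (simp add: fps_compose_mult_distrib fps_nth_one_minus_exp_neg_0)
  moreover have "fps_deriv (Li_neg_comp k) = ?D * fps_exp (-1)"
    unfolding Li_neg_comp_def
    by (simp add: fps_compose_deriv fps_nth_one_minus_exp_neg_0 fps_deriv_one_minus_exp_neg)
  ultimately show ?thesis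
    by (simp add: fps_exp_1_mult_exp_neg_1 mult.left_commute)
qed

lemma int_span_exp_Li_neg_comp: "int_span_exp (Li_neg_comp k)"
proof (induction k)
  case 0
  have "Li_neg_comp 0 = fps_exp (of_nat 1) - fps_exp (of_nat 0)"
    by (simp add: Li_neg_comp_0 one_minus_exp_neg_mult_exp_1)
  then show ?case
    by (simp only: int_span_exp_diff int_span_exp_exp)
next
  case (Suc k)
  have "Li_neg_comp (Suc k) =
      fps_exp (of_nat 1) * fps_deriv (Li_neg_comp k) - fps_deriv (Li_neg_comp k)"
    by (simp add: Li_neg_comp_Suc mult.assoc [symmetric] one_minus_exp_neg_mult_exp_1
        algebra_simps)
  then show ?case
    using Suc by (simp only: int_span_exp_diff int_span_exp_exp_mult int_span_exp_deriv)
qed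

lemma one_minus_exp_neg_nonzero: "one_minus_exp_neg \<noteq> 0"
  by (metis fps_deriv_one_minus_exp_neg fps_deriv_0 fps_exp_neq_0)

lemma poly_bernoulli_gf_neg: "poly_bernoulli_gf (- int k) = Li_neg_comp k / one_minus_exp_neg"
  by (simp only: poly_bernoulli_gf_def Li_neg_comp_def)

lemma int_span_exp_poly_bernoulli_gf_neg: "int_span_exp (poly_bernoulli_gf (- int k))"
proof (cases k)
  case 0
  have "poly_bernoulli_gf (- int k) = fps_exp (of_nat 1)"
    unfolding poly_bernoulli_gf_neg 0 Li_neg_comp_0 using one_minus_exp_neg_nonzero by simp
  then show ?thesis
    by (simp only: int_span_exp_exp)
next
  case (Suc j)
  have "poly_bernoulli_gf (- int k) = fps_exp (of_nat 1) * fps_deriv (Li_neg_comp j)"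
    unfolding poly_bernoulli_gf_neg Suc Li_neg_comp_Suc using one_minus_exp_neg_nonzero by simp
  then show ?thesis
    by (simp only: int_span_exp_exp_mult int_span_exp_deriv int_span_exp_Li_neg_comp)
qed

theorem corollary2p3:
  fixes k M n m :: nat
  assumes "k > 0" and "M > 0"
    and "\<forall>p\<in>prime_factors M. multiplicity p M \<le> n"
    and "\<forall>p\<in>prime_factors M. multiplicity p M \<le> m"
    and "[n = m] (mod totient M)"
  shows "\<exists>c::int. poly_bernoulli (- int k) n - poly_bernoulli (- int k) m = of_int (int M * c)"
proof -
  have "[a ^ n = a ^ m] (mod M)" for a
    using assms(3-5) by (rule cong_pow_totient)
  then show ?thesis
    unfolding poly_bernoulli_def
    by (rule int_span_exp_fact_nth_cong[OF int_span_exp_poly_bernoulli_gf_neg])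
qed

end
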